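(* Let $X$ be a compact Hausdorff space containing at least $n+1$ points, where $n\ge1$, and let $H\subset C(X)$ be an $n$-dimensional Haar subspace, where $C(X)$ is the space of real-valued continuous functions on $X$ with norm $\|f\|=\max_{x\in X}|f(x)|$. Let $A$ be a compact Hausdorff space and $\{f_a\}_{a\in A}\subset C(X)$ with $a\mapsto f_a$ continuous from $A$ into $C(X)$. Let $f^*\in H$ be a best simultaneous approximation to $\{f_a\}$ from $H$ (i.e. $\max_{a\in A}\|f_a-f^*\|\le\max_{a\in A}\|f_a-f\|$ for all $f\in H$) and suppose there exist an integer $k$ with $1\le k\le n+1$, elements $a_1,\dots,a_k\in A$, points $x_1,\dots,x_k\in X$, and positive numbers $\lambda_1,\dots,\lambda_k$ with $\sum_{i=1}^k\lambda_i=1$ such that (i') $\sum_{i=1}^k\lambda_i\,(f_{a_i}(x_i)-f^*(x_i))\,f(x_i)=0$ for all $f\in H$, and (ii) $|f_{a_i}(x_i)-f^*(x_i)|=\|f_{a_i}-f^*\|=\max_{a\in A}\|f_a-f^*\|$ for all $1\le i\le k$. If the points $x_1,\dots,x_k$ are pairwise distinct and the common value in (ii) is nonzero, then there exists $\gamma>0$ such that $$\max_{a\in A}\|f_a-h\|\ge\max_{a\in A}\|f_a-f^*\|+\gamma\|f^*-h\|\quad\text{for all } h\in H.$$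
   Context: An $n$-dimensional subspace $H\subset C(X)$ is a Haar subspace if for any $n$ distinct points $x_1,\dots,x_n\in X$ and any real numbers $r_1,\dots,r_n$ there is a unique $f\in H$ with $f(x_j)=r_j$ for $1\le j\le n$. *)

theory Defs
  imports "HOL-Analysis.Analysis"
begin

text \<open>C(X) for a compact Hausdorff space X (the type 'x with compact UNIV) is represented
by the bounded continuous functions of type bcontfun, whose norm is the sup norm.\<close>

definition haar_subspace :: "('x::topological_space \<Rightarrow>\<^sub>C real) set \<Rightarrow> nat \<Rightarrow> bool" where
  "haar_subspace H n \<longleftrightarrow> subspace H \<and> dim H = n \<and>
     (\<forall>xs::nat \<Rightarrow> 'x. inj_on xs {..<n} \<longrightarrow>
        (\<forall>r::nat \<Rightarrow> real. \<exists>!f. f \<in> H \<and> (\<forall>j<n. apply_bcontfun f (xs j) = r j)))"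

end

theory Submission
  imports Defs
begin

(* Let E be the minimal deviation and e_i = f_{a_i}(x_i) - f*(x_i), so |e_i| = E. By the Haar
   property an annihilating functional sum_i c_i f(x_i) on H with some c_i nonzero needs more than n
   nodes, so k = n + 1 and x_1, ..., x_n are interpolation nodes; through the Lagrange basis the values
   of g in H at these nodes control ||g||. For g = f* - h put t_i = sgn(e_i) g(x_i). Condition (i')
   says sum_i lam_i t_i = 0, which forces |t_i| <= (max t) / lam_i, hence gamma ||g|| <= max t for a
   gamma depending only on H, the nodes and the weights. At the index i of the maximum,
   ||f_{a_i} - h|| >= |e_i + g(x_i)| >= E + t_i. *)

lemma apply_bcontfun_sum:
  "apply_bcontfun (sum f A) x = (\<Sum>i\<in>A. apply_bcontfun (f i) x)"
  by (induction A rule: infinite_finite_induct) auto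

lemma inj_on_lessThan_extend:
  fixes xs :: "nat \<Rightarrow> 'a" and S :: "'a set"
  assumes inj: "inj_on xs {..<k}" and "k \<le> n" "finite S" "n \<le> card S"
  obtains ys where "inj_on ys {..<n}" "\<forall>i<k. ys i = xs i"
proof -
  have "card S - card (xs ` {..<k}) \<le> card (S - xs ` {..<k})"
    by (rule diff_card_le_card_Diff) simp
  then have "n - k \<le> card (S - xs ` {..<k})"
    using assms card_image[OF inj] by simp
  then obtain T where T: "T \<subseteq> S - xs ` {..<k}" "card T = n - k" "finite T"
    by (rule obtain_subset_with_card_n)
  then obtain e where e: "bij_betw e {k..<n} T"
    using finite_same_card_bij[of "{k..<n}" T] by auto
  define ys where "ys i = (if i < k then xs i else e i)" for i
  have "inj_on ys ({..<k} \<union> {k..<n})"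
    unfolding inj_on_Un
  proof (intro conjI)
    show "inj_on ys {..<k}" using inj by (simp add: ys_def inj_on_def)
    show "inj_on ys {k..<n}" using e by (auto simp: ys_def inj_on_def bij_betw_def)
    show "ys ` ({..<k} - {k..<n}) \<inter> ys ` ({k..<n} - {..<k}) = {}"
      using e T(1) by (auto simp: ys_def bij_betw_def)
  qed
  moreover have "{..<k} \<union> {k..<n} = {..<n}" using \<open>k \<le> n\<close> by auto
  ultimately show thesis by (intro that[of ys]) (auto simp: ys_def)
qed

lemma weighted_mean_zero_abs_le:
  fixes lam t :: "'i \<Rightarrow> real"
  assumes "finite I" "\<forall>i\<in>I. lam i > 0" "sum lam I = 1" "(\<Sum>i\<in>I. lam i * t i) = 0"
    and "\<forall>i\<in>I. t i \<le> M" "j \<in> I"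
  shows "lam j * \<bar>t j\<bar> \<le> M"
proof -
  have "0 = (\<Sum>i\<in>I. lam i * t i)" using assms(4) by simp
  also have "\<dots> \<le> (\<Sum>i\<in>I. lam i * M)"
    using assms by (intro sum_mono mult_left_mono) auto
  also have "\<dots> = M" using assms(3) by (simp add: sum_distrib_right[symmetric])
  finally have M0: "0 \<le> M" .
  have rest: "(\<Sum>i\<in>I-{j}. lam i) = 1 - lam j"
    using sum.remove[OF assms(1,6), of lam] assms(3) by simp
  have "(\<Sum>i\<in>I-{j}. lam i) \<ge> 0" using assms(2) by (intro sum_nonneg) auto
  then have lam_le_1: "lam j \<le> 1" using rest by simp
  have "- (lam j * t j) = (\<Sum>i\<in>I-{j}. lam i * t i)"
    using sum.remove[OF assms(1,6), of "\<lambda>i. lam i * t i"] assms(4) by simp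
  also have "\<dots> \<le> (\<Sum>i\<in>I-{j}. lam i * M)"
    using assms by (intro sum_mono mult_left_mono) auto
  also have "\<dots> = (1 - lam j) * M" using rest by (simp add: sum_distrib_right[symmetric])
  also have "\<dots> \<le> M" using M0 assms(2,6) by (simp add: algebra_simps less_imp_le)
  finally have lower: "- (lam j * t j) \<le> M" .
  have "lam j * t j \<le> lam j * M"
    using assms(2,5,6) by (simp add: less_imp_le mult_left_mono)
  also have "\<dots> \<le> M"
    using mult_left_le_one_le[OF M0 _ lam_le_1] assms(2,6) by (meson less_imp_le)
  finally have upper: "lam j * t j \<le> M" .
  show ?thesis using lower upper by (cases "t j \<ge> 0") auto
qed

lemma abs_add_sgn_mult_le:
  fixes e y :: real
  shows "\<bar>e\<bar> + sgn e * y \<le> \<bar>e + y\<bar>"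
  by (cases "e > 0"; cases "e < 0") (auto simp: sgn_if)

lemma haar_subspace_interpolation:
  assumes "haar_subspace H n" "inj_on xs {..<n}"
  shows "\<exists>!f. f \<in> H \<and> (\<forall>i<n. apply_bcontfun f (xs i) = r i)"
  using assms unfolding haar_subspace_def by blast

lemma haar_subspace_lagrange_basis:
  assumes "haar_subspace H n" "inj_on xs {..<n}"
  obtains b where "\<forall>j<n. b j \<in> H"
    "\<And>g. g \<in> H \<Longrightarrow> g = (\<Sum>j<n. apply_bcontfun g (xs j) *\<^sub>R b j)"
proof -
  note interp = haar_subspace_interpolation[OF assms]
  have "\<exists>f. f \<in> H \<and> (\<forall>i<n. apply_bcontfun f (xs i) = (if i = j then 1 else 0))" for j
    using interp[of "\<lambda>i. if i = j then 1 else 0"] by blast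
  then obtain b where b: "\<forall>j. b j \<in> H \<and> (\<forall>i<n. apply_bcontfun (b j) (xs i) = (if i = j then 1 else 0))"
    by metis
  have "g = (\<Sum>j<n. apply_bcontfun g (xs j) *\<^sub>R b j)" if g: "g \<in> H" for g
  proof -
    have "subspace H" using assms(1) by (simp add: haar_subspace_def)
    then have "(\<Sum>j<n. apply_bcontfun g (xs j) *\<^sub>R b j) \<in> H"
      using b by (intro subspace_sum subspace_scale) auto
    moreover have "apply_bcontfun (\<Sum>j<n. apply_bcontfun g (xs j) *\<^sub>R b j) (xs i)
        = apply_bcontfun g (xs i)" if "i < n" for i
    proof -
      have "apply_bcontfun (\<Sum>j<n. apply_bcontfun g (xs j) *\<^sub>R b j) (xs i)
          = (\<Sum>j<n. if j = i then apply_bcontfun g (xs j) else 0)"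
        unfolding apply_bcontfun_sum using b that by (intro sum.cong) auto
      then show ?thesis using that by simp
    qed
    ultimately show ?thesis
      using interp[of "\<lambda>i. apply_bcontfun g (xs i)"] g by blast
  qed
  with b show thesis by (intro that) auto
qed

lemma haar_subspace_norm_le_nodal_values:
  assumes "haar_subspace H n" "inj_on xs {..<n}"
  obtains C where "C \<ge> 0"
    "\<And>g B. g \<in> H \<Longrightarrow> \<forall>j<n. \<bar>apply_bcontfun g (xs j)\<bar> \<le> B \<Longrightarrow> norm g \<le> C * B"
proof -
  obtain b where b: "\<forall>j<n. b j \<in> H"
    "\<And>g. g \<in> H \<Longrightarrow> g = (\<Sum>j<n. apply_bcontfun g (xs j) *\<^sub>R b j)"
    using haar_subspace_lagrange_basis[OF assms] by blast
  have "norm g \<le> (\<Sum>j<n. norm (b j)) * B"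
    if "g \<in> H" "\<forall>j<n. \<bar>apply_bcontfun g (xs j)\<bar> \<le> B" for g B
  proof -
    have "norm g = norm (\<Sum>j<n. apply_bcontfun g (xs j) *\<^sub>R b j)" using b(2)[OF that(1)] by simp
    also have "\<dots> \<le> (\<Sum>j<n. \<bar>apply_bcontfun g (xs j)\<bar> * norm (b j))"
      by (rule order_trans[OF norm_sum]) simp
    also have "\<dots> \<le> (\<Sum>j<n. B * norm (b j))"
      using that(2) by (intro sum_mono mult_right_mono) auto
    finally show ?thesis by (simp add: sum_distrib_left mult.commute)
  qed
  then show thesis by (intro that[of "\<Sum>j<n. norm (b j)"]) (auto intro: sum_nonneg)
qed

lemma haar_subspace_annihilator_nodes_gt:
  fixes S :: "'x::topological_space set" and xs :: "nat \<Rightarrow> 'x"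
  assumes "haar_subspace H n" "finite S" "n \<le> card S" "inj_on xs {..<k}"
    and "\<forall>f\<in>H. (\<Sum>i<k. c i * apply_bcontfun f (xs i)) = 0" "j < k" "c j \<noteq> 0"
  shows "n < k"
proof (rule ccontr)
  assume "\<not> n < k"
  then have "k \<le> n" by simp
  obtain ys where ys: "inj_on ys {..<n}" "\<forall>i<k. ys i = xs i"
    by (rule inj_on_lessThan_extend[OF assms(4) \<open>k \<le> n\<close> assms(2,3)])
  then obtain f where f: "f \<in> H" "\<forall>i<n. apply_bcontfun f (ys i) = (if i = j then 1 else 0)"
    using haar_subspace_interpolation[OF assms(1), of ys "\<lambda>i. if i = j then 1 else 0"] by blast
  have "apply_bcontfun f (xs i) = (if i = j then 1 else 0)" if "i < k" for i
    using f(2) ys(2) \<open>k \<le> n\<close> that by (metis order_less_le_trans)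
  then have "(\<Sum>i<k. c i * apply_bcontfun f (xs i)) = (\<Sum>i<k. if i = j then c j else 0)"
    by (intro sum.cong) auto
  also have "\<dots> = c j" using assms(6) by simp
  finally show False using assms(5,7) f(1) by simp
qed

lemma haar_subspace_norm_bound_balanced:
  assumes "haar_subspace H n" "inj_on xs {..<n}" "n \<le> k"
    and "\<forall>i<k. lam i > 0" "(\<Sum>i<k. lam i) = 1"
  obtains \<gamma> where "\<gamma> > 0"
    "\<And>g t M. g \<in> H \<Longrightarrow> \<forall>i<k. \<bar>t i\<bar> = \<bar>apply_bcontfun g (xs i)\<bar> \<Longrightarrow>
      (\<Sum>i<k. lam i * t i) = 0 \<Longrightarrow> \<forall>i<k. t i \<le> M \<Longrightarrow> \<gamma> * norm g \<le> M"
proof -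
  obtain C where C: "C \<ge> 0"
    "\<And>g B. g \<in> H \<Longrightarrow> \<forall>j<n. \<bar>apply_bcontfun g (xs j)\<bar> \<le> B \<Longrightarrow> norm g \<le> C * B"
    using haar_subspace_norm_le_nodal_values[OF assms(1,2)] by blast
  have "k \<noteq> 0" using assms(5) by (intro notI) simp
  define l where "l = Min (lam ` {..<k})"
  have l_pos: "l > 0" using assms(4) \<open>k \<noteq> 0\<close> by (simp add: l_def lessThan_empty_iff)
  have l_le: "l \<le> lam i" if "i < k" for i using that by (simp add: l_def)
  have "l / (C + 1) * norm g \<le> M"
    if g: "g \<in> H" and t: "\<forall>i<k. \<bar>t i\<bar> = \<bar>apply_bcontfun g (xs i)\<bar>"
      and mean: "(\<Sum>i<k. lam i * t i) = 0" and M: "\<forall>i<k. t i \<le> M" for g t M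
  proof -
    have weighted: "lam i * \<bar>t i\<bar> \<le> M" if "i < k" for i
      using weighted_mean_zero_abs_le[of "{..<k}" lam t M i] assms(4,5) mean M that by simp
    have "0 \<le> lam 0 * \<bar>t 0\<bar>" using assms(4) \<open>k \<noteq> 0\<close> by (simp add: less_imp_le)
    then have "0 \<le> M" using weighted[of 0] \<open>k \<noteq> 0\<close> by linarith
    have "\<bar>apply_bcontfun g (xs j)\<bar> \<le> M / l" if "j < n" for j
    proof -
      have "l * \<bar>t j\<bar> \<le> lam j * \<bar>t j\<bar>" using l_le that assms(3) by (simp add: mult_right_mono)
      also have "\<dots> \<le> M" using weighted that assms(3) by simp
      finally show ?thesis using t that assms(3) l_pos by (simp add: field_simps)
    qed
    then have "norm g \<le> C * (M / l)" by (rule C(2)[OF g, rule_format])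
    then have "l * norm g \<le> C * M" using l_pos by (simp add: field_simps)
    then have "l * norm g / (C + 1) \<le> C * M / (C + 1)"
      using C(1) by (simp add: divide_right_mono)
    also have "\<dots> \<le> M" using C(1) \<open>0 \<le> M\<close> by (simp add: field_simps)
    finally show ?thesis by simp
  qed
  then show thesis using l_pos C(1) by (intro that[of "l / (C + 1)"]) auto
qed

lemma haar_subspace_strong_uniqueness_constant:
  assumes "haar_subspace H n" "inj_on xs {..<n}" "n \<le> k"
    and "\<forall>i<k. lam i > 0" "(\<Sum>i<k. lam i) = 1"
  obtains \<gamma> where "\<gamma> > 0"
    "\<And>g \<sigma>. g \<in> H \<Longrightarrow> \<forall>i<k. \<bar>\<sigma> i\<bar> = 1 \<Longrightarrow>
      (\<Sum>i<k. lam i * (\<sigma> i * apply_bcontfun g (xs i))) = 0 \<Longrightarrow>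
      \<exists>i<k. \<gamma> * norm g \<le> \<sigma> i * apply_bcontfun g (xs i)"
proof -
  obtain \<gamma> where \<gamma>: "\<gamma> > 0"
    "\<And>g t M. g \<in> H \<Longrightarrow> \<forall>i<k. \<bar>t i\<bar> = \<bar>apply_bcontfun g (xs i)\<bar> \<Longrightarrow>
      (\<Sum>i<k. lam i * t i) = 0 \<Longrightarrow> \<forall>i<k. t i \<le> M \<Longrightarrow> \<gamma> * norm g \<le> M"
    using haar_subspace_norm_bound_balanced[OF assms] by blast
  have "k \<noteq> 0" using assms(5) by (intro notI) simp
  have "\<exists>i<k. \<gamma> * norm g \<le> \<sigma> i * apply_bcontfun g (xs i)"
    if g: "g \<in> H" and \<sigma>: "\<forall>i<k. \<bar>\<sigma> i\<bar> = 1"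
      and balanced: "(\<Sum>i<k. lam i * (\<sigma> i * apply_bcontfun g (xs i))) = 0" for g \<sigma>
  proof -
    define t where "t i = \<sigma> i * apply_bcontfun g (xs i)" for i
    define M where "M = Max (t ` {..<k})"
    have "M \<in> t ` {..<k}" using \<open>k \<noteq> 0\<close> unfolding M_def by (intro Max_in) auto
    then obtain i where "i < k" "t i = M" by auto
    moreover have "\<gamma> * norm g \<le> M"
      using \<gamma>(2)[OF g, of t M] \<sigma> balanced by (simp add: t_def M_def abs_mult)
    ultimately show ?thesis unfolding t_def by auto
  qed
  with \<gamma>(1) show thesis by (rule that)
qed

lemma abs_apply_le_SUP_norm_diff:
  fixes F :: "'a::topological_space \<Rightarrow> ('x::topological_space \<Rightarrow>\<^sub>C real)"
  assumes "compact (UNIV :: 'a set)" "continuous_on UNIV F"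
  shows "\<bar>apply_bcontfun (F a - h) x\<bar> \<le> (SUP a. norm (F a - h))"
proof -
  have "continuous_on UNIV (\<lambda>a. norm (F a - h))"
    using assms(2) by (intro continuous_intros)
  then have "compact (range (\<lambda>a. norm (F a - h)))"
    using assms(1) by (rule compact_continuous_image)
  then have "bdd_above (range (\<lambda>a. norm (F a - h)))"
    by (intro bounded_imp_bdd_above compact_imp_bounded)
  then show ?thesis
    using norm_bounded[of "F a - h" x] cSUP_upper[of a UNIV "\<lambda>a. norm (F a - h)"] by simp
qed

theorem theorem4:
  fixes F :: "'a::t2_space \<Rightarrow> ('x::t2_space \<Rightarrow>\<^sub>C real)"
    and H :: "('x \<Rightarrow>\<^sub>C real) set"
    and n k :: nat
    and fs :: "'x \<Rightarrow>\<^sub>C real"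
    and as :: "nat \<Rightarrow> 'a" and xs :: "nat \<Rightarrow> 'x" and lam :: "nat \<Rightarrow> real"
  assumes "compact (UNIV :: 'x set)"
    and "\<exists>S :: 'x set. finite S \<and> card S = n + 1"
    and "n \<ge> 1"
    and "haar_subspace H n"
    and "compact (UNIV :: 'a set)"
    and "continuous_on UNIV F"
    and "fs \<in> H"
    and "\<forall>f\<in>H. (SUP a. norm (F a - fs)) \<le> (SUP a. norm (F a - f))"
    and "1 \<le> k" and "k \<le> n + 1"
    and "\<forall>i<k. lam i > 0"
    and "(\<Sum>i<k. lam i) = 1"
    and "\<forall>f\<in>H. (\<Sum>i<k. lam i * (apply_bcontfun (F (as i)) (xs i) - apply_bcontfun fs (xs i))
                       * apply_bcontfun f (xs i)) = 0"
    and "\<forall>i<k. \<bar>apply_bcontfun (F (as i)) (xs i) - apply_bcontfun fs (xs i)\<bar> = norm (F (as i) - fs)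
              \<and> norm (F (as i) - fs) = (SUP a. norm (F a - fs))"
    and "inj_on xs {..<k}"
    and "(SUP a. norm (F a - fs)) \<noteq> 0"
  shows "\<exists>\<gamma>>0. \<forall>h\<in>H. (SUP a. norm (F a - h)) \<ge> (SUP a. norm (F a - fs)) + \<gamma> * norm (fs - h)"
proof -
  define E where "E = (SUP a. norm (F a - fs))"
  define e where "e i = apply_bcontfun (F (as i)) (xs i) - apply_bcontfun fs (xs i)" for i
  have e_abs: "\<bar>e i\<bar> = E" if "i < k" for i
    using assms(14) that unfolding e_def E_def by auto
  have e_nonzero: "e i \<noteq> 0" if "i < k" for i
    using e_abs[OF that] assms(16) unfolding E_def by auto
  obtain S :: "'x set" where S: "finite S" "n \<le> card S" using assms(2) by auto
  have "\<forall>f\<in>H. (\<Sum>i<k. lam i * e i * apply_bcontfun f (xs i)) = 0"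
    using assms(13) unfolding e_def .
  moreover have "lam 0 * e 0 \<noteq> 0" using assms(9,11) e_nonzero by force
  ultimately have "n < k"
    using haar_subspace_annihilator_nodes_gt[OF assms(4) S assms(15), of "\<lambda>i. lam i * e i" 0]
      assms(9) by simp
  then have "inj_on xs {..<n}" using inj_on_subset[OF assms(15), of "{..<n}"] by simp
  obtain \<gamma> where \<gamma>: "\<gamma> > 0"
    "\<And>g \<sigma>. g \<in> H \<Longrightarrow> \<forall>i<k. \<bar>\<sigma> i\<bar> = 1 \<Longrightarrow>
      (\<Sum>i<k. lam i * (\<sigma> i * apply_bcontfun g (xs i))) = 0 \<Longrightarrow>
      \<exists>i<k. \<gamma> * norm g \<le> \<sigma> i * apply_bcontfun g (xs i)"
    using haar_subspace_strong_uniqueness_constant[OF assms(4) \<open>inj_on xs {..<n}\<close>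
        less_imp_le[OF \<open>n < k\<close>] assms(11,12)] by blast
  have "E + \<gamma> * norm (fs - h) \<le> (SUP a. norm (F a - h))" if h: "h \<in> H" for h
  proof -
    define g where "g = fs - h"
    have "g \<in> H" using assms(4,7) h unfolding g_def haar_subspace_def by (simp add: subspace_diff)
    have "sgn (e i) = e i / E" if "i < k" for i
      using e_abs[OF that] by (simp add: real_sgn_eq)
    then have "(\<Sum>i<k. lam i * (sgn (e i) * apply_bcontfun g (xs i)))
        = (\<Sum>i<k. lam i * e i * apply_bcontfun g (xs i)) / E"
      by (simp add: sum_divide_distrib mult.assoc)
    also have "\<dots> = 0" using assms(13) \<open>g \<in> H\<close> unfolding e_def by simp
    finally obtain i where i: "i < k" "\<gamma> * norm g \<le> sgn (e i) * apply_bcontfun g (xs i)"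
      using \<gamma>(2)[OF \<open>g \<in> H\<close>, of "\<lambda>i. sgn (e i)"] e_nonzero by (auto simp: abs_sgn_eq)
    have "E + sgn (e i) * apply_bcontfun g (xs i) \<le> \<bar>e i + apply_bcontfun g (xs i)\<bar>"
      using abs_add_sgn_mult_le[of "e i"] e_abs[OF i(1)] by simp
    also have "\<dots> \<le> (SUP a. norm (F a - h))"
      using abs_apply_le_SUP_norm_diff[OF assms(5,6), of "as i" h "xs i"] by (simp add: e_def g_def)
    finally show ?thesis using i(2) unfolding g_def by linarith
  qed
  with \<gamma>(1) show ?thesis unfolding E_def by blast
qed

end
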